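(* For every term $t\in T( *,\circ,x)$ and every $f\in\mathcal{G}(\mathtt{ALD})$ such that $t\cdot f$ is defined, we have $\mathcal{C}(t\cdot f)\sim\mathcal{C}(t)\bullet\mathrm{sh}_0(f)$.
   Context: $T( *,\circ,x)$: terms in the single variable $x$ with binary symbols $*,\circ$. Addresses are finite sequences over $\{0,1\}$, $\varepsilon$ empty; $t/\alpha$ the subterm at $\alpha$. Partial operators act on the right, $f\bullet g$ = "$f$ then $g$", $f^{-1}$ the inverse partial map. $S^{+}_{\alpha}$: defined iff $t/\alpha=t_1*(t_2\square t_3)$, $\square\in\{*,\circ\}$, replacing it by $(t_1*t_2)\square(t_1*t_3)$; $A^{+}_{\alpha}$: defined iff $t/\alpha=t_1*(t_2*t_3)$, replacing it by $(t_1\circ t_2)*t_3$; $S^-_\alpha,A^-_\alpha$ the inverses. $\mathcal{G}(\mathtt{ALD})$ is the monoid of partial maps generated by these. $\mathrm{sh}_\beta(f)$ applies $f$ to the $\beta$-th subterm. The map $\mathcal{C}:T( *,\circ,x)\to\mathcal{G}(\mathtt{ALD})$ is defined by $\mathcal{C}(x)=\mathrm{id}$, $\mathcal{C}(t_1*t_2)=\mathcal{C}(t_1)\bullet\mathrm{sh}_1(\mathcal{C}(t_2))\bullet S^{+}_{\varepsilon}\bullet\mathrm{sh}_1(\mathcal{C}(t_1))^{-1}$, $\mathcal{C}(t_1\circ t_2)=\mathcal{C}(t_1)\bullet\mathrm{sh}_1(\mathcal{C}(t_2))\bullet A^{+}_{\varepsilon}$. For partial maps $f,g$ on terms, $f\sim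 g$ means there exists at least one term $u$ on which both $f$ and $g$ are defined with $u\cdot f=u\cdot g$. *)

theory Defs
  imports Main
begin

datatype trm = X | Star trm trm | Circ trm trm

text \<open>Addresses: finite sequences over {0,1}; we encode 0 as False (left) and 1 as True (right).\<close>
type_synonym addr = "bool list"

text \<open>Partial maps on terms; u \<cdot> f is written f u.\<close>
type_synonym pmap = "trm \<Rightarrow> trm option"

text \<open>f \<bullet> g = "f then g".\<close>
definition pcomp :: "pmap \<Rightarrow> pmap \<Rightarrow> pmap" where
  "pcomp f g = (\<lambda>t. Option.bind (f t) g)"

definition pid :: pmap where
  "pid = (\<lambda>t. Some t)"

definition pinv :: "pmap \<Rightarrow> pmap" where
  "pinv f = (\<lambda>u. if \<exists>t. f t = Some u then Some (SOME t. f t = Some u) else None)"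

fun subterm :: "trm \<Rightarrow> addr \<Rightarrow> trm option" where
  "subterm t [] = Some t"
| "subterm (Star a b) (False # al) = subterm a al"
| "subterm (Star a b) (True # al) = subterm b al"
| "subterm (Circ a b) (False # al) = subterm a al"
| "subterm (Circ a b) (True # al) = subterm b al"
| "subterm X (_ # _) = None"

fun sh :: "addr \<Rightarrow> pmap \<Rightarrow> pmap" where
  "sh [] f t = f t"
| "sh (False # al) f (Star a b) = map_option (\<lambda>a'. Star a' b) (sh al f a)"
| "sh (True # al) f (Star a b) = map_option (\<lambda>b'. Star a b') (sh al f b)"
| "sh (False # al) f (Circ a b) = map_option (\<lambda>a'. Circ a' b) (sh al f a)"
| "sh (True # al) f (Circ a b) = map_option (\<lambda>b'. Circ a b') (sh al f b)"
| "sh (_ # _) f X = None"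

fun Sroot :: pmap where
  "Sroot (Star t1 (Star t2 t3)) = Some (Star (Star t1 t2) (Star t1 t3))"
| "Sroot (Star t1 (Circ t2 t3)) = Some (Circ (Star t1 t2) (Star t1 t3))"
| "Sroot _ = None"

fun Aroot :: pmap where
  "Aroot (Star t1 (Star t2 t3)) = Some (Star (Circ t1 t2) t3)"
| "Aroot _ = None"

definition Splus :: "addr \<Rightarrow> pmap" where "Splus al = sh al Sroot"
definition Aplus :: "addr \<Rightarrow> pmap" where "Aplus al = sh al Aroot"
definition Sminus :: "addr \<Rightarrow> pmap" where "Sminus al = pinv (Splus al)"
definition Aminus :: "addr \<Rightarrow> pmap" where "Aminus al = pinv (Aplus al)"

definition gens :: "pmap set" where
  "gens = (\<Union>al. {Splus al, Aplus al, Sminus al, Aminus al})"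

inductive_set G_ALD :: "pmap set" where
  G_id: "pid \<in> G_ALD"
| G_step: "f \<in> G_ALD \<Longrightarrow> g \<in> gens \<Longrightarrow> pcomp f g \<in> G_ALD"

fun Cmap :: "trm \<Rightarrow> pmap" where
  "Cmap X = pid"
| "Cmap (Star t1 t2) =
     pcomp (pcomp (pcomp (Cmap t1) (sh [True] (Cmap t2))) (Splus [])) (pinv (sh [True] (Cmap t1)))"
| "Cmap (Circ t1 t2) = pcomp (pcomp (Cmap t1) (sh [True] (Cmap t2))) (Aplus [])"

definition psim :: "pmap \<Rightarrow> pmap \<Rightarrow> bool" where
  "psim f g = (\<exists>u v. f u = Some v \<and> g u = Some v)"

end

theory Submission
  imports Defs
begin

text \<open>Both sides can be evaluated on a long right comb \<open>x*(x*(\<dots>*x))\<close>: by induction on \<open>t\<close>,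
  \<open>\<C>(t)\<close> maps such a comb to \<open>t * c\<close> for a shorter comb \<open>c\<close>, whose length depends on \<open>t\<close> only
  through a weight that every operator of \<open>\<G>(ALD)\<close> preserves. Hence \<open>\<C>(t\<cdot>f)\<close> and
  \<open>\<C>(t)\<bullet>sh\<^sub>0(f)\<close> both send the comb to the same term \<open>(t\<cdot>f) * c\<close>.\<close>

fun right_comb :: "nat \<Rightarrow> trm" where
  "right_comb 0 = X"
| "right_comb (Suc n) = Star X (right_comb n)"

text \<open>The number of leaves \<open>\<C>(t)\<close> removes from a right comb.\<close>
fun comb_cost :: "trm \<Rightarrow> nat" where
  "comb_cost X = 1"
| "comb_cost (Star a b) = comb_cost b"
| "comb_cost (Circ a b) = comb_cost a + comb_cost b"

text \<open>A comb length that suffices for all intermediate steps of the evaluation of \<open>\<C>(t)\<close>.\<close>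
fun comb_bound :: "trm \<Rightarrow> nat" where
  "comb_bound X = 1"
| "comb_bound (Star a b) = comb_bound a + comb_bound b + comb_cost a + comb_cost b"
| "comb_bound (Circ a b) = comb_bound a + comb_bound b + comb_cost a + comb_cost b"

lemma inj_on_domI:
  "(\<And>a b c. f a = Some c \<Longrightarrow> f b = Some c \<Longrightarrow> a = b) \<Longrightarrow> inj_on f (dom f)"
  by (rule inj_onI) (metis domD)

lemma inj_on_domD: "inj_on f (dom f) \<Longrightarrow> f a = Some c \<Longrightarrow> f b = Some c \<Longrightarrow> a = b"
  by (metis domI inj_onD)

lemma pinv_eq_SomeD: "pinv f b = Some a \<Longrightarrow> f a = Some b"
  by (auto simp: pinv_def split: if_splits intro: someI)

lemma pinv_eq_SomeI:
  assumes "inj_on f (dom f)" and "f a = Some b"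
  shows "pinv f b = Some a"
proof -
  have "f (SOME a. f a = Some b) = Some b"
    using assms(2) by (rule someI)
  then have "(SOME a. f a = Some b) = a"
    using assms(1,2) by (blast intro: inj_on_domD)
  then show ?thesis
    using assms(2) by (auto simp: pinv_def)
qed

lemma inj_on_dom_pinv: "inj_on (pinv f) (dom (pinv f))"
proof (rule inj_on_domI)
  fix u v a assume "pinv f u = Some a" and "pinv f v = Some a"
  then have "f a = Some u" and "f a = Some v"
    by (blast intro: pinv_eq_SomeD)+
  then show "u = v"
    by simp
qed

lemma inj_on_dom_pcomp:
  assumes "inj_on f (dom f)" and "inj_on g (dom g)"
  shows "inj_on (pcomp f g) (dom (pcomp f g))"
proof (rule inj_on_domI)
  fix u v c assume "pcomp f g u = Some c" and "pcomp f g v = Some c"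
  then obtain a b where "f u = Some a" "g a = Some c" "f v = Some b" "g b = Some c"
    by (auto simp: pcomp_def bind_eq_Some_conv)
  with assms show "u = v"
    by (metis inj_on_domD)
qed

lemma inj_on_dom_pid: "inj_on pid (dom pid)"
  by (simp add: pid_def)

lemma inj_on_dom_Sroot: "inj_on Sroot (dom Sroot)"
  by (rule inj_on_domI) (auto elim!: Sroot.elims)

lemma inj_on_dom_Aroot: "inj_on Aroot (dom Aroot)"
  by (rule inj_on_domI) (auto elim!: Aroot.elims)

lemma sh_eq_Some_inj:
  "inj_on f (dom f) \<Longrightarrow> sh al f a = Some c \<Longrightarrow> sh al f b = Some c \<Longrightarrow> a = b"
proof (induction al f a arbitrary: b c rule: sh.induct)
  case (1 f t)
  then show ?case by (metis inj_on_domD sh.simps(1))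
next
  case (2 al f a1 a2)
  then show ?case by (cases b) auto
next
  case (3 al f a1 a2)
  then show ?case by (cases b) auto
next
  case (4 al f a1 a2)
  then show ?case by (cases b) auto
next
  case (5 al f a1 a2)
  then show ?case by (cases b) auto
qed simp

lemma inj_on_dom_sh:
  assumes "inj_on f (dom f)"
  shows "inj_on (sh al f) (dom (sh al f))"
  using sh_eq_Some_inj[OF assms] by (rule inj_on_domI)

lemma inj_on_dom_Cmap: "inj_on (Cmap t) (dom (Cmap t))"
  by (induction t) (auto intro!: inj_on_dom_pcomp inj_on_dom_sh inj_on_dom_pinv inj_on_dom_pid
      inj_on_dom_Sroot inj_on_dom_Aroot simp: Splus_def Aplus_def)

lemma Cmap_right_comb:
  "comb_bound t \<le> n \<Longrightarrow> Cmap t (right_comb n) = Some (Star t (right_comb (n - comb_cost t)))"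
proof (induction t arbitrary: n)
  case X
  then obtain m where "n = Suc m" by (cases n) auto
  then show ?case by (simp add: pid_def)
next
  case (Star t1 t2)
  let ?k1 = "comb_cost t1" and ?k2 = "comb_cost t2"
  have "Cmap t1 (right_comb n) = Some (Star t1 (right_comb (n - ?k1)))"
    using Star by simp
  moreover have "sh [True] (Cmap t2) (Star t1 (right_comb (n - ?k1)))
      = Some (Star t1 (Star t2 (right_comb (n - ?k1 - ?k2))))"
    using Star by simp
  moreover have "sh [True] (Cmap t1) (Star (Star t1 t2) (right_comb (n - ?k2)))
      = Some (Star (Star t1 t2) (Star t1 (right_comb (n - ?k1 - ?k2))))"
    using Star by (simp add: add.commute)
  then have "pinv (sh [True] (Cmap t1)) (Star (Star t1 t2) (Star t1 (right_comb (n - ?k1 - ?k2))))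
      = Some (Star (Star t1 t2) (right_comb (n - ?k2)))"
    by (rule pinv_eq_SomeI[OF inj_on_dom_sh[OF inj_on_dom_Cmap]])
  ultimately show ?case
    by (simp add: pcomp_def Splus_def)
next
  case (Circ t1 t2)
  then show ?case by (simp add: pcomp_def Aplus_def diff_diff_add)
qed

definition preserves :: "(trm \<Rightarrow> 'a) \<Rightarrow> pmap \<Rightarrow> bool" where
  "preserves \<phi> f \<longleftrightarrow> (\<forall>a b. f a = Some b \<longrightarrow> \<phi> a = \<phi> b)"

lemma preserves_pid: "preserves \<phi> pid"
  by (simp add: preserves_def pid_def)

lemma preserves_pcomp: "preserves \<phi> f \<Longrightarrow> preserves \<phi> g \<Longrightarrow> preserves \<phi> (pcomp f g)"
  by (auto simp: preserves_def pcomp_def bind_eq_Some_conv)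

lemma preserves_pinv: "preserves \<phi> f \<Longrightarrow> preserves \<phi> (pinv f)"
  by (auto simp: preserves_def dest: pinv_eq_SomeD)

lemma preserves_comb_cost_sh:
  assumes "preserves comb_cost f"
  shows "preserves comb_cost (sh al f)"
proof -
  have "sh al f a = Some c \<Longrightarrow> comb_cost a = comb_cost c" for a c
    using assms
    by (induction al f a arbitrary: c rule: sh.induct) (auto simp: preserves_def)
  then show ?thesis by (simp add: preserves_def)
qed

lemma preserves_comb_cost_Sroot: "preserves comb_cost Sroot"
  by (auto simp: preserves_def elim!: Sroot.elims)

lemma preserves_comb_cost_Aroot: "preserves comb_cost Aroot"
  by (auto simp: preserves_def elim!: Aroot.elims)

lemma preserves_comb_cost_G_ALD:
  assumes "f \<in> G_ALD"
  shows "preserves comb_cost f"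
proof -
  have gens: "preserves comb_cost g" if "g \<in> gens" for g
    using that unfolding gens_def Splus_def Aplus_def Sminus_def Aminus_def
    by (auto intro!: preserves_comb_cost_sh preserves_pinv
        preserves_comb_cost_Sroot preserves_comb_cost_Aroot)
  from assms show ?thesis
    by induction (auto intro: preserves_pid preserves_pcomp gens)
qed

theorem lemma3p5:
  fixes t t' :: trm and f :: pmap
  assumes "f \<in> G_ALD" and "f t = Some t'"
  shows "psim (Cmap t') (pcomp (Cmap t) (sh [False] f))"
proof -
  define n where "n = comb_bound t + comb_bound t'"
  define c where "c = right_comb (n - comb_cost t)"
  have "comb_cost t = comb_cost t'"
    using preserves_comb_cost_G_ALD[OF assms(1)] assms(2) by (simp add: preserves_def)
  then have "Cmap t' (right_comb n) = Some (Star t' c)"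
    using Cmap_right_comb[of t' n] by (simp add: n_def c_def)
  moreover have "pcomp (Cmap t) (sh [False] f) (right_comb n) = Some (Star t' c)"
    using Cmap_right_comb[of t n] assms(2) by (simp add: n_def c_def pcomp_def)
  ultimately show ?thesis
    unfolding psim_def by blast
qed

end
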